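(* For any $\beta>0$ and any $B>0$, \[ \mathbb{P}_{(0,2B)}\left(\tau_2(y) < \tau_2(B)\right) \ge (1-\mathrm{e}^{-\beta B})\mathrm{e}^{-\beta(y-2B)} \] for all $y \ge 2B$.
   Context: For $\beta>0$ and an initial state $(x,y)$ with $x\le 0$, $y\ge 0$, let $(Q_1,Q_2)$ be the continuous process on $[0,\infty)$ solving \[ Q_1(t) = x + \sqrt{2}W(t) - \beta t + \int_0^t(-Q_1(s)+Q_2(s))\,ds - L(t),\qquad Q_2(t) = y + L(t) - \int_0^t Q_2(s)\,ds, \] where $W$ is a standard Brownian motion and $L$ is the unique nondecreasing nonnegative càdlàg process with $L(0)=0$ such that $Q_1(t)\le 0$ for all $t$ and $\int_0^\infty \mathbf{1}_{[Q_1(t)<0]}\,dL(t)=0$. $\mathbb{P}_{(x,y)}$ denotes probability when $(Q_1(0),Q_2(0))=(x,y)$; $\tau_2(z)=\inf\{t\ge0: Q_2(t)=z\}$. *)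

theory Defs
  imports "HOL-Probability.Probability"
begin

definition std_brownian_motion :: "'a measure \<Rightarrow> (real \<Rightarrow> 'a \<Rightarrow> real) \<Rightarrow> bool" where
  "std_brownian_motion M W \<longleftrightarrow>
     prob_space M \<and>
     (\<forall>t. W t \<in> borel_measurable M) \<and>
     (\<forall>\<omega>\<in>space M. W 0 \<omega> = 0 \<and> continuous_on {0..} (\<lambda>t. W t \<omega>)) \<and>
     (\<forall>s t. 0 \<le> s \<longrightarrow> s < t \<longrightarrow>
        distributed M lborel (\<lambda>\<omega>. W t \<omega> - W s \<omega>)
          (\<lambda>x. ennreal (normal_density 0 (sqrt (t - s)) x))) \<and>
     (\<forall>(ts :: nat \<Rightarrow> real) n. 0 \<le> ts 0 \<longrightarrow> (\<forall>i<n. ts i < ts (Suc i)) \<longrightarrow>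
        prob_space.indep_vars M (\<lambda>_. borel) (\<lambda>i \<omega>. W (ts (Suc i)) \<omega> - W (ts i) \<omega>) {..<n})"

text \<open>The condition that L increases only when Q1 = 0 is
  the Lebesgue--Stieltjes integral condition: the measure dL (L extended by 0 to the left
  of time 0) gives zero mass to {t >= 0. Q1 t < 0}.\<close>
definition reflected_solution ::
  "'a measure \<Rightarrow> real \<Rightarrow> real \<Rightarrow> real \<Rightarrow> (real \<Rightarrow> 'a \<Rightarrow> real) \<Rightarrow>
   (real \<Rightarrow> 'a \<Rightarrow> real) \<Rightarrow> (real \<Rightarrow> 'a \<Rightarrow> real) \<Rightarrow> (real \<Rightarrow> 'a \<Rightarrow> real) \<Rightarrow> bool" where
  "reflected_solution M \<beta> x y W Q1 Q2 L \<longleftrightarrow>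
     (\<forall>t. Q1 t \<in> borel_measurable M \<and> Q2 t \<in> borel_measurable M \<and> L t \<in> borel_measurable M) \<and>
     (\<forall>\<omega>\<in>space M.
        continuous_on {0..} (\<lambda>t. Q1 t \<omega>) \<and> continuous_on {0..} (\<lambda>t. Q2 t \<omega>) \<and>
        (\<forall>t\<ge>0. Q1 t \<omega> = x + sqrt 2 * W t \<omega> - \<beta> * t
                   + integral {0..t} (\<lambda>s. - Q1 s \<omega> + Q2 s \<omega>) - L t \<omega>) \<and>
        (\<forall>t\<ge>0. Q2 t \<omega> = y + L t \<omega> - integral {0..t} (\<lambda>s. Q2 s \<omega>)) \<and>
        L 0 \<omega> = 0 \<and>
        (\<forall>t\<ge>0. 0 \<le> L t \<omega>) \<and>
        (\<forall>s t. 0 \<le> s \<longrightarrow> s \<le> t \<longrightarrow> L s \<omega> \<le> L t \<omega>) \<and>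
        (\<forall>t\<ge>0. ((\<lambda>s. L s \<omega>) \<longlongrightarrow> L t \<omega>) (at_right t)) \<and>
        (\<forall>t>0. \<exists>l. ((\<lambda>s. L s \<omega>) \<longlongrightarrow> l) (at_left t)) \<and>
        (\<forall>t\<ge>0. Q1 t \<omega> \<le> 0) \<and>
        emeasure (interval_measure (\<lambda>t. L (max 0 t) \<omega>)) {t. 0 \<le> t \<and> Q1 t \<omega> < 0} = 0)"

text \<open>Hitting time inf {t >= 0. f t = z}, with inf of the empty set = +oo.\<close>
definition hitting_time :: "(real \<Rightarrow> real) \<Rightarrow> real \<Rightarrow> ereal" where
  "hitting_time f z = Inf (ereal ` {t. 0 \<le> t \<and> f t = z})"

end

theory Submission
  imports Defs "HOL-Real_Asymp.Real_Asymp"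
begin

text \<open>Since \<open>Q\<^sub>1 \<le> 0\<close>, adding the two equations gives \<open>Q\<^sub>2 t \<ge> 2B + X t\<close> for the drifted
  motion \<open>X t = \<surd>2 W t - \<beta> t\<close>, so it suffices that \<open>X\<close> reaches \<open>y - 2B\<close> before \<open>-B\<close>. As
  \<open>exp (\<beta> X)\<close> is a martingale, optional stopping at the exit from \<open>(-B, y - 2B)\<close> gives
  \<open>1 \<le> exp (\<beta> (y - 2B)) p + exp (-\<beta> B) (1 - p)\<close> for the probability \<open>p\<close> of exiting at the top,
  which is the claimed bound. This is carried out for the walk obtained by sampling \<open>X\<close> on the
  grid of mesh \<open>H/2\<^sup>n\<close> in \<open>[0, H]\<close>, with the lower barrier raised to \<open>\<epsilon> - B\<close>. The error terms
  (overshoot at the upper barrier, no exit before time \<open>H\<close>, dips of \<open>X\<close> by more than \<open>\<epsilon>\<close>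
  between grid points) vanish as \<open>n \<rightarrow> \<infinity>\<close>, then \<open>H \<rightarrow> \<infinity>\<close>, and finally \<open>\<epsilon> \<rightarrow> 0\<close>.\<close>

section \<open>Exponential moments of the drifted Brownian motion\<close>

lemma normal_density_mult_exp:
  fixes \<sigma> l x :: real
  assumes "\<sigma> > 0"
  shows "normal_density 0 \<sigma> x * exp (l * x) = exp (l\<^sup>2 * \<sigma>\<^sup>2 / 2) * normal_density (l * \<sigma>\<^sup>2) \<sigma> x"
proof -
  have "- (x - 0)\<^sup>2 / (2 * \<sigma>\<^sup>2) + l * x = l\<^sup>2 * \<sigma>\<^sup>2 / 2 + (- (x - l * \<sigma>\<^sup>2)\<^sup>2 / (2 * \<sigma>\<^sup>2))"
    using assms by (simp add: field_simps power2_eq_square)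
  then show ?thesis
    unfolding normal_density_def by (simp add: exp_add[symmetric] mult_ac)
qed

lemma normal_mgf:
  fixes \<sigma> l :: real
  assumes "\<sigma> > 0" and Z: "distributed M lborel Z (\<lambda>x. ennreal (normal_density 0 \<sigma> x))"
  shows "integrable M (\<lambda>\<omega>. exp (l * Z \<omega>))"
    and "(\<integral>\<omega>. exp (l * Z \<omega>) \<partial>M) = exp (l\<^sup>2 * \<sigma>\<^sup>2 / 2)"
proof -
  have density: "(\<lambda>x. normal_density 0 \<sigma> x * exp (l * x))
      = (\<lambda>x. exp (l\<^sup>2 * \<sigma>\<^sup>2 / 2) * normal_density (l * \<sigma>\<^sup>2) \<sigma> x)"
    using normal_density_mult_exp[OF assms(1)] by auto
  have "integrable lborel (\<lambda>x. normal_density 0 \<sigma> x * exp (l * x))"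
    unfolding density using assms by (intro integrable_mult_right integrable_normal_density)
  then show "integrable M (\<lambda>\<omega>. exp (l * Z \<omega>))"
    using distributed_integrable[OF Z, of "\<lambda>x. exp (l * x)"] by simp
  have "(\<integral>\<omega>. exp (l * Z \<omega>) \<partial>M) = (\<integral>x. normal_density 0 \<sigma> x * exp (l * x) \<partial>lborel)"
    using distributed_integral[OF Z, of "\<lambda>x. exp (l * x)"] by simp
  also have "\<dots> = exp (l\<^sup>2 * \<sigma>\<^sup>2 / 2)"
    unfolding density using assms by simp
  finally show "(\<integral>\<omega>. exp (l * Z \<omega>) \<partial>M) = exp (l\<^sup>2 * \<sigma>\<^sup>2 / 2)" .
qed

lemma std_brownian_motionD:
  assumes "std_brownian_motion M W"
  shows "prob_space M" and "W t \<in> borel_measurable M"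
    and "\<omega> \<in> space M \<Longrightarrow> W 0 \<omega> = 0"
    and "\<omega> \<in> space M \<Longrightarrow> continuous_on {0..} (\<lambda>t. W t \<omega>)"
  using assms unfolding std_brownian_motion_def by blast+

definition drift_bm :: "(real \<Rightarrow> 'a \<Rightarrow> real) \<Rightarrow> real \<Rightarrow> real \<Rightarrow> 'a \<Rightarrow> real" where
  "drift_bm W \<beta> t \<omega> = sqrt 2 * W t \<omega> - \<beta> * t"

lemma drift_bm_measurable [measurable]:
  "std_brownian_motion M W \<Longrightarrow> drift_bm W \<beta> t \<in> borel_measurable M"
  using std_brownian_motionD(2) unfolding drift_bm_def by measurable

lemma drift_bm_zero: "std_brownian_motion M W \<Longrightarrow> \<omega> \<in> space M \<Longrightarrow> drift_bm W \<beta> 0 \<omega> = 0"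
  using std_brownian_motionD(3) unfolding drift_bm_def by simp

lemma drift_bm_continuous:
  "std_brownian_motion M W \<Longrightarrow> \<omega> \<in> space M \<Longrightarrow> continuous_on {0..} (\<lambda>t. drift_bm W \<beta> t \<omega>)"
  unfolding drift_bm_def by (intro continuous_intros std_brownian_motionD(4))

lemma drift_bm_increment_mgf:
  assumes "std_brownian_motion M W" and "0 \<le> s" and "s < t"
  shows "integrable M (\<lambda>\<omega>. exp (c * (drift_bm W \<beta> t \<omega> - drift_bm W \<beta> s \<omega>)))"
    and "(\<integral>\<omega>. exp (c * (drift_bm W \<beta> t \<omega> - drift_bm W \<beta> s \<omega>)) \<partial>M) = exp ((c\<^sup>2 - c * \<beta>) * (t - s))"
proof -
  have Z: "distributed M lborel (\<lambda>\<omega>. W t \<omega> - W s \<omega>) (\<lambda>x. ennreal (normal_density 0 (sqrt (t - s)) x))"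
    using assms unfolding std_brownian_motion_def by blast
  have \<sigma>: "sqrt (t - s) > 0" using assms by simp
  have eq: "(\<lambda>\<omega>. exp (c * (drift_bm W \<beta> t \<omega> - drift_bm W \<beta> s \<omega>)))
      = (\<lambda>\<omega>. exp (- c * \<beta> * (t - s)) * exp ((c * sqrt 2) * (W t \<omega> - W s \<omega>)))"
    by (simp add: drift_bm_def exp_add[symmetric] algebra_simps)
  show "integrable M (\<lambda>\<omega>. exp (c * (drift_bm W \<beta> t \<omega> - drift_bm W \<beta> s \<omega>)))"
    unfolding eq by (intro integrable_mult_right normal_mgf(1)[OF \<sigma> Z])
  show "(\<integral>\<omega>. exp (c * (drift_bm W \<beta> t \<omega> - drift_bm W \<beta> s \<omega>)) \<partial>M) = exp ((c\<^sup>2 - c * \<beta>) * (t - s))"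
    unfolding eq integral_mult_right_zero normal_mgf(2)[OF \<sigma> Z] using assms
    by (simp add: exp_add[symmetric] power_mult_distrib field_simps)
qed

section \<open>Comparison of the reflected system with the drifted motion\<close>

lemma reflected_solution_pathD:
  assumes "reflected_solution M \<beta> x y W Q1 Q2 L" and "\<omega> \<in> space M"
  shows "continuous_on {0..} (\<lambda>t. Q1 t \<omega>)" and "continuous_on {0..} (\<lambda>t. Q2 t \<omega>)"
    and "\<And>t. 0 \<le> t \<Longrightarrow> Q1 t \<omega> = x + sqrt 2 * W t \<omega> - \<beta> * t
                   + integral {0..t} (\<lambda>s. - Q1 s \<omega> + Q2 s \<omega>) - L t \<omega>"
    and "\<And>t. 0 \<le> t \<Longrightarrow> Q2 t \<omega> = y + L t \<omega> - integral {0..t} (\<lambda>s. Q2 s \<omega>)"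
    and "L 0 \<omega> = 0" and "\<And>t. 0 \<le> t \<Longrightarrow> Q1 t \<omega> \<le> 0"
  using assms(1)[unfolded reflected_solution_def, THEN conjunct2, THEN bspec, OF assms(2)]
  by (elim conjE; iprover)+

lemma reflected_solution_measurable:
  assumes "reflected_solution M \<beta> x y W Q1 Q2 L"
  shows "Q2 t \<in> borel_measurable M"
  using assms[unfolded reflected_solution_def, THEN conjunct1] by blast

lemma reflected_solution_Q2_zero:
  assumes "reflected_solution M \<beta> x y W Q1 Q2 L" and "\<omega> \<in> space M"
  shows "Q2 0 \<omega> = y"
  using reflected_solution_pathD(4)[OF assms, of 0] reflected_solution_pathD(5)[OF assms] by simp

lemma reflected_solution_Q2_ge:
  assumes R: "reflected_solution M \<beta> x y W Q1 Q2 L" and \<omega>: "\<omega> \<in> space M" and t: "0 \<le> t"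
  shows "x + y + drift_bm W \<beta> t \<omega> \<le> Q2 t \<omega>"
proof -
  note path = reflected_solution_pathD[OF R \<omega>]
  have int1: "(\<lambda>s. Q1 s \<omega>) integrable_on {0..t}"
    by (intro integrable_continuous_interval continuous_on_subset[OF path(1)]) auto
  have int2: "(\<lambda>s. Q2 s \<omega>) integrable_on {0..t}"
    by (intro integrable_continuous_interval continuous_on_subset[OF path(2)]) auto
  have "integral {0..t} (\<lambda>s. - Q1 s \<omega> + Q2 s \<omega>) = integral {0..t} (\<lambda>s. Q2 s \<omega>) - integral {0..t} (\<lambda>s. Q1 s \<omega>)"
    using integral_diff[OF int2 int1] by (simp add: algebra_simps)
  moreover have "integral {0..t} (\<lambda>s. Q1 s \<omega>) \<le> 0"
    using integral_nonneg[of "\<lambda>s. - Q1 s \<omega>" "{0..t}"] integrable_neg[OF int1] path(6)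
    by (simp add: integral_neg)
  ultimately show ?thesis
    using path(3,4,6)[OF t] unfolding drift_bm_def by linarith
qed

section \<open>Hitting times of continuous paths\<close>

lemma closure_Icc_Int_Rats:
  fixes a b :: real
  assumes "a < b"
  shows "closure ({a..b} \<inter> \<rat>) = {a..b}"
proof
  show "closure ({a..b} \<inter> \<rat>) \<subseteq> {a..b}"
    by (simp add: closure_minimal)
  have "{a<..<b} \<subseteq> closure ({a<..<b} \<inter> \<rat>)"
    using open_Int_closure_subset[of "{a<..<b}" \<rat>] by (simp add: Rats_closure_real)
  also have "\<dots> \<subseteq> closure ({a..b} \<inter> \<rat>)"
    by (intro closure_mono) auto
  finally show "{a..b} \<subseteq> closure ({a..b} \<inter> \<rat>)"
    using closure_minimal[of "{a<..<b}"] closure_greaterThanLessThan[OF assms] by blast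
qed

lemma continuous_on_Icc_ge_if_Rats:
  fixes f :: "real \<Rightarrow> real"
  assumes "continuous_on {a..b} f" and "a < b"
    and "\<And>r. r \<in> \<rat> \<Longrightarrow> a \<le> r \<Longrightarrow> r \<le> b \<Longrightarrow> c \<le> f r" and "t \<in> {a..b}"
  shows "c \<le> f t"
  using continuous_ge_on_closure[of "{a..b} \<inter> \<rat>" f t c] assms by (simp add: closure_Icc_Int_Rats)

lemma continuous_on_Icc_le_if_Rats:
  fixes f :: "real \<Rightarrow> real"
  assumes "continuous_on {a..b} f" and "a < b"
    and "\<And>r. r \<in> \<rat> \<Longrightarrow> a \<le> r \<Longrightarrow> r \<le> b \<Longrightarrow> f r \<le> c" and "t \<in> {a..b}"
  shows "f t \<le> c"
  using continuous_le_on_closure[of "{a..b} \<inter> \<rat>" f t c] assms by (simp add: closure_Icc_Int_Rats)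

text \<open>The right-hand sides below only evaluate \<open>f\<close> at countably many rational times; this is
  what makes the event \<open>hits_first\<close> measurable.\<close>

lemma continuous_on_Icc_above_iff_Rats:
  fixes f :: "real \<Rightarrow> real"
  assumes f: "continuous_on {a..b} f" and ab: "a < b"
  shows "(\<forall>t\<in>{a..b}. c < f t) \<longleftrightarrow>
    (\<exists>m::nat. \<forall>r\<in>\<rat>. a \<le> r \<longrightarrow> r \<le> b \<longrightarrow> c + 1 / (real m + 1) \<le> f r)"
proof
  assume above: "\<forall>t\<in>{a..b}. c < f t"
  obtain s where s: "s \<in> {a..b}" "\<And>t. t \<in> {a..b} \<Longrightarrow> f s \<le> f t"
    using continuous_attains_inf[OF compact_Icc _ f] ab by fastforce
  obtain m :: nat where "1 / (real m + 1) < f s - c"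
    using above s(1) by (metis diff_gt_0_iff_gt nat_approx_posE of_nat_Suc add.commute)
  then show "\<exists>m::nat. \<forall>r\<in>\<rat>. a \<le> r \<longrightarrow> r \<le> b \<longrightarrow> c + 1 / (real m + 1) \<le> f r"
    using s(2) by (intro exI[of _ m]) force
next
  assume "\<exists>m::nat. \<forall>r\<in>\<rat>. a \<le> r \<longrightarrow> r \<le> b \<longrightarrow> c + 1 / (real m + 1) \<le> f r"
  then obtain m :: nat where "\<And>r. r \<in> \<rat> \<Longrightarrow> a \<le> r \<Longrightarrow> r \<le> b \<Longrightarrow> c + 1 / (real m + 1) \<le> f r"
    by blast
  from continuous_on_Icc_ge_if_Rats[OF f ab this]
  show "\<forall>t\<in>{a..b}. c < f t"
    by (smt (verit) of_nat_less_0_iff divide_pos_pos)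
qed

lemma continuous_on_Icc_reaches_iff_Rats:
  fixes f :: "real \<Rightarrow> real"
  assumes f: "continuous_on {a..b} f" and ab: "a < b"
  shows "(\<exists>t\<in>{a..b}. c \<le> f t) \<longleftrightarrow>
    (\<forall>m::nat. \<exists>r\<in>\<rat>. a \<le> r \<and> r \<le> b \<and> c - 1 / (real m + 1) < f r)"
proof
  assume "\<exists>t\<in>{a..b}. c \<le> f t"
  then obtain t where t: "t \<in> {a..b}" "c \<le> f t" by blast
  show "\<forall>m::nat. \<exists>r\<in>\<rat>. a \<le> r \<and> r \<le> b \<and> c - 1 / (real m + 1) < f r"
  proof (rule ccontr)
    assume "\<not> ?thesis"
    then obtain m :: nat where "\<And>r. r \<in> \<rat> \<Longrightarrow> a \<le> r \<Longrightarrow> r \<le> b \<Longrightarrow> f r \<le> c - 1 / (real m + 1)"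
      by (auto simp: not_less)
    from continuous_on_Icc_le_if_Rats[OF f ab this t(1)] t(2) show False
      by (smt (verit) of_nat_less_0_iff divide_pos_pos)
  qed
next
  assume approx: "\<forall>m::nat. \<exists>r\<in>\<rat>. a \<le> r \<and> r \<le> b \<and> c - 1 / (real m + 1) < f r"
  obtain s where s: "s \<in> {a..b}" "\<And>t. t \<in> {a..b} \<Longrightarrow> f t \<le> f s"
    using continuous_attains_sup[OF compact_Icc _ f] ab by fastforce
  have "c \<le> f s"
  proof (rule ccontr)
    assume "\<not> c \<le> f s"
    then obtain m :: nat where m: "1 / (real m + 1) < c - f s"
      by (metis diff_gt_0_iff_gt nat_approx_posE not_le of_nat_Suc add.commute)
    from approx obtain r where "a \<le> r" "r \<le> b" "c - 1 / (real m + 1) < f r"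
      by blast
    with s(2)[of r] m show False by force
  qed
  with s(1) show "\<exists>t\<in>{a..b}. c \<le> f t" by blast
qed

lemma hitting_time_le: "0 \<le> t \<Longrightarrow> f t = z \<Longrightarrow> hitting_time f z \<le> ereal t"
  unfolding hitting_time_def by (intro Inf_lower) auto

lemma less_hitting_time:
  fixes f :: "real \<Rightarrow> real"
  assumes f: "continuous_on {0..} f" and T: "0 \<le> T" and above: "\<forall>s\<in>{0..T}. z < f s"
  shows "ereal T < hitting_time f z"
proof -
  have "continuous (at T within {0..}) f"
    using f T by (simp add: continuous_on_eq_continuous_within)
  moreover have "z < f T" using above T by auto
  ultimately obtain e where e: "e > 0" "\<And>s. s \<in> {0..} \<Longrightarrow> dist s T < e \<Longrightarrow> dist (f s) (f T) < f T - z"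
    unfolding continuous_within_eps_delta by (metis diff_gt_0_iff_gt)
  have "ereal T < ereal (T + e)" using e(1) by simp
  also have "\<dots> \<le> hitting_time f z"
    unfolding hitting_time_def
  proof (rule Inf_greatest)
    fix x assume "x \<in> ereal ` {t. 0 \<le> t \<and> f t = z}"
    then obtain s where s: "x = ereal s" "0 \<le> s" "f s = z" by auto
    then have "T < s" and "\<not> dist s T < e"
      using above e(2)[of s] by (auto simp: dist_real_def)
    then show "ereal (T + e) \<le> x" using s by (auto simp: dist_real_def)
  qed
  finally show ?thesis .
qed

lemma above_before_hitting_time:
  fixes f :: "real \<Rightarrow> real"
  assumes f: "continuous_on {0..} f" and "z < f 0" and t: "0 \<le> t" "ereal t < hitting_time f z"
  shows "z < f t"
proof (rule ccontr)
  assume "\<not> z < f t"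
  moreover have "continuous_on {0..t} f" using f by (rule continuous_on_subset) auto
  ultimately obtain s where "0 \<le> s" "s \<le> t" "f s = z"
    using IVT2'[of f t z 0] \<open>z < f 0\<close> t(1) by auto
  then have "hitting_time f z \<le> ereal t"
    using hitting_time_le[of s f z] by (simp add: order_trans)
  with t(2) show False by simp
qed

lemma hitting_time_less_if_reaches:
  fixes f :: "real \<Rightarrow> real"
  assumes f: "continuous_on {0..} f" and "f 0 \<le> y" and T: "0 \<le> T"
    and above: "\<forall>s\<in>{0..T}. z < f s" and reach: "y \<le> f T"
  shows "hitting_time f y < hitting_time f z"
proof -
  have "continuous_on {0..T} f" using f by (rule continuous_on_subset) auto
  then obtain t where t: "0 \<le> t" "t \<le> T" "f t = y"
    using IVT'[of f 0 y T] assms by auto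
  then have "hitting_time f y \<le> ereal T"
    using hitting_time_le[of t f y] by (simp add: order_trans)
  also have "\<dots> < hitting_time f z" by (rule less_hitting_time[OF f T above])
  finally show ?thesis .
qed

lemma hitting_time_less_iff:
  fixes f :: "real \<Rightarrow> real"
  assumes f: "continuous_on {0..} f" and start: "z < f 0" "f 0 \<le> y"
  shows "hitting_time f y < hitting_time f z \<longleftrightarrow>
    (\<exists>q\<in>\<rat>. 0 < q \<and> (\<forall>t\<in>{0..q}. z < f t) \<and> (\<exists>t\<in>{0..q}. y \<le> f t))"
proof
  assume "hitting_time f y < hitting_time f z"
  then obtain t where t: "0 \<le> t" "f t = y" "ereal t < hitting_time f z"
    unfolding hitting_time_def[of f y] by (auto simp: Inf_less_iff)
  obtain q where q: "q \<in> \<rat>" "t < q" "ereal q < hitting_time f z"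
  proof (cases "hitting_time f z")
    case (real u)
    with t(3) show ?thesis using Rats_dense_in_real[of t u] that by auto
  next
    case PInf
    then show ?thesis using Rats_dense_in_real[of t "t + 1"] that by auto
  qed (use t in auto)
  have "\<forall>s\<in>{0..q}. z < f s"
  proof
    fix s assume "s \<in> {0..q}"
    then have "ereal s \<le> ereal q" by simp
    then have "ereal s < hitting_time f z"
      using q(3) by (rule le_less_trans)
    with \<open>s \<in> {0..q}\<close> show "z < f s"
      by (simp add: above_before_hitting_time[OF f start(1)])
  qed
  with q t show "\<exists>q\<in>\<rat>. 0 < q \<and> (\<forall>t\<in>{0..q}. z < f t) \<and> (\<exists>t\<in>{0..q}. y \<le> f t)"
    by (intro bexI[of _ q]) auto
next
  assume "\<exists>q\<in>\<rat>. 0 < q \<and> (\<forall>t\<in>{0..q}. z < f t) \<and> (\<exists>t\<in>{0..q}. y \<le> f t)"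
  then obtain q t where "0 \<le> t" "t \<le> q" "\<forall>s\<in>{0..t}. z < f s" "y \<le> f t"
    by auto
  then show "hitting_time f y < hitting_time f z"
    using hitting_time_less_if_reaches[OF f start(2)] by blast
qed

definition hits_first :: "'a measure \<Rightarrow> (real \<Rightarrow> 'a \<Rightarrow> real) \<Rightarrow> real \<Rightarrow> real \<Rightarrow> 'a set" where
  "hits_first M Z y z = {\<omega> \<in> space M. hitting_time (\<lambda>t. Z t \<omega>) y < hitting_time (\<lambda>t. Z t \<omega>) z}"

lemma hits_first_sets:
  assumes Z [measurable]: "\<And>t. Z t \<in> borel_measurable M"
    and cont: "\<And>\<omega>. \<omega> \<in> space M \<Longrightarrow> continuous_on {0..} (\<lambda>t. Z t \<omega>)"
    and start: "\<And>\<omega>. \<omega> \<in> space M \<Longrightarrow> z < Z 0 \<omega>" "\<And>\<omega>. \<omega> \<in> space M \<Longrightarrow> Z 0 \<omega> \<le> y"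
  shows "hits_first M Z y z \<in> sets M"
proof -
  have "hits_first M Z y z =
    {\<omega> \<in> space M. \<exists>q\<in>\<rat>. 0 < q
       \<and> (\<exists>m::nat. \<forall>r\<in>\<rat>. 0 \<le> r \<longrightarrow> r \<le> q \<longrightarrow> z + 1 / (real m + 1) \<le> Z r \<omega>)
       \<and> (\<forall>m::nat. \<exists>r\<in>\<rat>. 0 \<le> r \<and> r \<le> q \<and> y - 1 / (real m + 1) < Z r \<omega>)}"
    unfolding hits_first_def
  proof (intro Collect_cong conj_cong refl, goal_cases)
    case (1 \<omega>)
    have "continuous_on {0..q} (\<lambda>t. Z t \<omega>)" for q
      using cont[OF 1] by (rule continuous_on_subset) auto
    then show ?case
      unfolding hitting_time_less_iff[OF cont[OF 1] start[OF 1]]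
      by (intro bex_cong conj_cong refl continuous_on_Icc_above_iff_Rats continuous_on_Icc_reaches_iff_Rats)
  qed
  also have "\<dots> \<in> sets M"
    using countable_rat by measurable
  finally show ?thesis .
qed

section \<open>The stopped exponential martingale of a random walk\<close>

definition partial_sum :: "(nat \<Rightarrow> real) \<Rightarrow> nat \<Rightarrow> real" where
  "partial_sum v k = (\<Sum>i<k. v i)"

definition stays_inside :: "real \<Rightarrow> real \<Rightarrow> (nat \<Rightarrow> real) \<Rightarrow> nat \<Rightarrow> bool" where
  "stays_inside lo hi v k \<longleftrightarrow> (\<forall>j\<le>k. lo < partial_sum v j \<and> partial_sum v j < hi)"

text \<open>\<open>stopped_exp be lo hi v k = exp (be * partial_sum v (min \<tau> k))\<close>, where \<open>\<tau>\<close> is the first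
  exit time of the walk from the strip \<open>{lo<..<hi}\<close>.\<close>

primrec stopped_exp :: "real \<Rightarrow> real \<Rightarrow> real \<Rightarrow> (nat \<Rightarrow> real) \<Rightarrow> nat \<Rightarrow> real" where
  "stopped_exp be lo hi v 0 = 1"
| "stopped_exp be lo hi v (Suc k) =
     (if stays_inside lo hi v k then exp (be * partial_sum v (Suc k)) else stopped_exp be lo hi v k)"

definition exits_above :: "real \<Rightarrow> real \<Rightarrow> (nat \<Rightarrow> real) \<Rightarrow> nat \<Rightarrow> bool" where
  "exits_above lo hi v N \<longleftrightarrow> (\<exists>k\<le>N. hi \<le> partial_sum v k \<and> (\<forall>j<k. lo < partial_sum v j))"

lemma partial_sum_0 [simp]: "partial_sum v 0 = 0"
  by (simp add: partial_sum_def)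

lemma partial_sum_Suc: "partial_sum v (Suc k) = partial_sum v k + v k"
  by (simp add: partial_sum_def)

lemma stays_inside_SucD: "stays_inside lo hi v (Suc k) \<Longrightarrow> stays_inside lo hi v k"
  unfolding stays_inside_def by auto

lemma stopped_exp_inside: "stays_inside lo hi v k \<Longrightarrow> stopped_exp be lo hi v k = exp (be * partial_sum v k)"
  by (induction k) (auto dest: stays_inside_SucD)

lemma stopped_exp_Suc_increment:
  "stopped_exp be lo hi v (Suc k) = stopped_exp be lo hi v k
     + (if stays_inside lo hi v k then exp (be * partial_sum v k) else 0) * (exp (be * v k) - 1)"
proof (cases "stays_inside lo hi v k")
  case True
  then show ?thesis
    by (simp add: stopped_exp_inside partial_sum_Suc distrib_left exp_add right_diff_distrib)
qed simp

lemma stopped_exp_after_exit: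
  assumes "\<not> stays_inside lo hi v k" and "k \<le> n"
  shows "stopped_exp be lo hi v n = stopped_exp be lo hi v k"
  using assms(2)
proof (induction n rule: dec_induct)
  case (step n)
  then have "\<not> stays_inside lo hi v n"
    using assms(1) unfolding stays_inside_def by (meson order_trans)
  with step.IH show ?case by simp
qed simp

lemma stopped_exp_at_exit:
  assumes "\<not> stays_inside lo hi v N"
  obtains k where "k \<le> N" and "stopped_exp be lo hi v N = exp (be * partial_sum v k)"
    and "partial_sum v k \<le> lo \<or> hi \<le> partial_sum v k"
    and "\<And>j. j < k \<Longrightarrow> lo < partial_sum v j \<and> partial_sum v j < hi"
proof -
  define exit where "exit j \<longleftrightarrow> \<not> (lo < partial_sum v j \<and> partial_sum v j < hi)" for j
  have "\<exists>j\<le>N. exit j" using assms unfolding stays_inside_def exit_def by auto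
  then obtain k where k: "k \<le> N \<and> exit k" and least: "\<And>j. j < k \<Longrightarrow> \<not> (j \<le> N \<and> exit j)"
    using exists_least_iff[of "\<lambda>j. j \<le> N \<and> exit j"] by blast
  then have before: "\<not> exit j" if "j < k" for j
    using that by auto
  have "stopped_exp be lo hi v N = stopped_exp be lo hi v k"
    using k by (intro stopped_exp_after_exit) (auto simp: stays_inside_def exit_def)
  also have "\<dots> = exp (be * partial_sum v k)"
  proof (cases k)
    case (Suc k')
    then have "stays_inside lo hi v k'"
      using before unfolding stays_inside_def exit_def by auto
    then show ?thesis using Suc by simp
  qed simp
  finally show ?thesis
    using that k before unfolding exit_def by auto
qed

lemma exp_partial_sum_overshoot_le:
  assumes "k \<le> N" and below: "\<And>j. j < k \<Longrightarrow> partial_sum v j < hi"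
    and "0 \<le> hi" and be: "be > 0" and "\<delta> > 0" and "\<mu> \<ge> 0"
  shows "exp (be * partial_sum v k)
    \<le> exp (be * (hi + \<delta>)) + exp (be * hi) * (\<Sum>i<N. exp ((be + \<mu>) * v i - \<mu> * \<delta>))"
proof -
  have nonneg: "0 \<le> exp (be * hi) * (\<Sum>i<N. exp ((be + \<mu>) * v i - \<mu> * \<delta>))"
    by (simp add: sum_nonneg)
  consider "partial_sum v k \<le> hi + \<delta>" | i where "i < N" "\<delta> < v i" "partial_sum v k \<le> hi + v i"
  proof (cases k)
    case 0
    then show ?thesis using that \<open>0 \<le> hi\<close> \<open>\<delta> > 0\<close> by simp
  next
    case (Suc i)
    then have "i < N" "partial_sum v k \<le> hi + v i"
      using below[of i] \<open>k \<le> N\<close> by (auto simp: partial_sum_Suc)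
    then show ?thesis using that by (cases "v i \<le> \<delta>") auto
  qed
  then show ?thesis
  proof cases
    case 1
    then show ?thesis using be nonneg by (simp add: add_increasing2)
  next
    case (2 i)
    have "be * partial_sum v k \<le> be * (hi + v i)"
      using 2 be by simp
    moreover have "\<mu> * \<delta> \<le> \<mu> * v i"
      using 2 \<open>\<mu> \<ge> 0\<close> by (simp add: mult_left_mono)
    ultimately have "be * partial_sum v k \<le> be * hi + ((be + \<mu>) * v i - \<mu> * \<delta>)"
      by (simp add: algebra_simps)
    then have "exp (be * partial_sum v k) \<le> exp (be * hi) * exp ((be + \<mu>) * v i - \<mu> * \<delta>)"
      by (simp flip: exp_add)
    also have "\<dots> \<le> exp (be * hi) * (\<Sum>i<N. exp ((be + \<mu>) * v i - \<mu> * \<delta>))"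
      using 2 by (intro mult_left_mono member_le_sum) auto
    finally show ?thesis by (simp add: add_increasing)
  qed
qed

lemma not_exits_above_if_exit_below:
  assumes "partial_sum v k \<le> lo" and "lo < hi"
    and inside: "\<And>j. j < k \<Longrightarrow> lo < partial_sum v j \<and> partial_sum v j < hi"
  shows "\<not> exits_above lo hi v N"
proof
  assume "exits_above lo hi v N"
  then obtain k' where "hi \<le> partial_sum v k'" "\<And>j. j < k' \<Longrightarrow> lo < partial_sum v j"
    unfolding exits_above_def by blast
  then show False
    using assms inside[of k'] by (cases k' k rule: linorder_cases) force+
qed

text \<open>The last term pays for the two ways of not exiting cleanly by time \<open>N\<close>: still being
  inside (a Chernoff bound, as then \<open>lo < partial_sum v N\<close>), or overshooting \<open>hi\<close> by more than
  \<open>\<delta>\<close> at the exit step.\<close>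

lemma stopped_exp_le:
  assumes lo: "lo < 0" and hi: "0 \<le> hi" and be: "be > 0" and "\<delta> > 0" and "\<mu> \<ge> 0" and "c \<ge> 0"
  shows "stopped_exp be lo hi v N \<le>
      exp (be * (hi + \<delta>)) * of_bool (exits_above lo hi v N)
    + exp (be * lo) * of_bool (\<not> exits_above lo hi v N)
    + exp (be * hi) * (exp (c * (partial_sum v N - lo)) + (\<Sum>i<N. exp ((be + \<mu>) * v i - \<mu> * \<delta>)))"
    (is "_ \<le> ?above + ?below + exp (be * hi) * (?inside + ?overshoot)")
proof -
  have nonneg: "0 \<le> ?above" "0 \<le> ?below" "0 \<le> exp (be * hi) * ?inside"
      "0 \<le> exp (be * hi) * ?overshoot"
    by (simp_all add: sum_nonneg)
  show ?thesis
  proof (cases "stays_inside lo hi v N")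
    case True
    then have "lo < partial_sum v N" "partial_sum v N < hi"
      unfolding stays_inside_def by auto
    then have "stopped_exp be lo hi v N \<le> exp (be * hi)"
      using True be by (simp add: stopped_exp_inside)
    also have "\<dots> \<le> exp (be * hi) * ?inside"
      using \<open>lo < partial_sum v N\<close> \<open>c \<ge> 0\<close> by simp
    finally show ?thesis using nonneg unfolding distrib_left by linarith
  next
    case False
    then obtain k where k: "k \<le> N" "stopped_exp be lo hi v N = exp (be * partial_sum v k)"
      "partial_sum v k \<le> lo \<or> hi \<le> partial_sum v k"
      and inside: "\<And>j. j < k \<Longrightarrow> lo < partial_sum v j \<and> partial_sum v j < hi"
      by (rule stopped_exp_at_exit[where be = be]) blast
    show ?thesis
    proof (cases "partial_sum v k \<le> lo")
      case True
      then have "\<not> exits_above lo hi v N"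
        using lo hi inside by (intro not_exits_above_if_exit_below) auto
      then have "stopped_exp be lo hi v N \<le> ?below"
        using True k(2) be by simp
      then show ?thesis using nonneg unfolding distrib_left by linarith
    next
      case False
      with k inside have "exits_above lo hi v N"
        unfolding exits_above_def by auto
      moreover have "exp (be * partial_sum v k) \<le> exp (be * (hi + \<delta>)) + exp (be * hi) * ?overshoot"
        using k(1) inside hi be \<open>\<delta> > 0\<close> \<open>\<mu> \<ge> 0\<close> by (intro exp_partial_sum_overshoot_le) auto
      ultimately have "stopped_exp be lo hi v N \<le> ?above + exp (be * hi) * ?overshoot"
        using k(2) by simp
      then show ?thesis using nonneg unfolding distrib_left by linarith
    qed
  qed
qed

lemma partial_sum_measurable_PiM:
  assumes "j \<le> k"
  shows "(\<lambda>r. partial_sum r j) \<in> borel_measurable (PiM {..<k} (\<lambda>_. borel))"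
  unfolding partial_sum_def
proof (rule borel_measurable_sum)
  fix i assume "i \<in> {..<j}"
  with assms show "(\<lambda>r. r i) \<in> borel_measurable (PiM {..<k} (\<lambda>_. borel))"
    by (intro measurable_component_singleton) auto
qed

lemma stays_inside_measurable_PiM:
  "Measurable.pred (PiM {..<k} (\<lambda>_. borel)) (\<lambda>r. stays_inside lo hi r k)"
proof -
  have "Measurable.pred (PiM {..<k} (\<lambda>_. borel)) (\<lambda>r. \<forall>j\<in>{..k}. lo < partial_sum r j \<and> partial_sum r j < hi)"
  proof (rule pred_intros_finite(3))
    fix j assume "j \<in> {..k}"
    then have [measurable]: "(\<lambda>r. partial_sum r j) \<in> borel_measurable (PiM {..<k} (\<lambda>_. borel))"
      by (intro partial_sum_measurable_PiM) auto
    show "Measurable.pred (PiM {..<k} (\<lambda>_. borel)) (\<lambda>r. lo < partial_sum r j \<and> partial_sum r j < hi)"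
      by measurable
  qed auto
  then show ?thesis
    unfolding stays_inside_def atMost_iff[symmetric] by (simp only: Ball_def)
qed

lemma partial_sum_restrict: "j \<le> k \<Longrightarrow> partial_sum (restrict r {..<k}) j = partial_sum r j"
  unfolding partial_sum_def by (intro sum.cong) auto

lemma stays_inside_restrict: "stays_inside lo hi (restrict r {..<k}) k = stays_inside lo hi r k"
  unfolding stays_inside_def by (simp add: partial_sum_restrict)

lemma indep_var_prefix_step:
  assumes "prob_space M" and indep: "prob_space.indep_vars M (\<lambda>_. borel) v {..<Suc k}"
    and F: "F \<in> borel_measurable (PiM {..<k} (\<lambda>_. borel))" and G: "G \<in> borel_measurable borel"
  shows "prob_space.indep_var M borel (\<lambda>\<omega>. F (restrict (\<lambda>i. v i \<omega>) {..<k})) borel (\<lambda>\<omega>. G (v k \<omega>))"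
proof -
  interpret prob_space M by fact
  have G_step: "(\<lambda>r. G (r k)) \<in> borel_measurable (PiM {k} (\<lambda>_. borel))"
    using measurable_component_singleton[of k "{k}" "\<lambda>_. borel"] G
    by (rule measurable_compose) simp
  have "indep_var (PiM {..<k} (\<lambda>_. borel)) (\<lambda>\<omega>. restrict (\<lambda>i. v i \<omega>) {..<k})
      (PiM {k} (\<lambda>_. borel)) (\<lambda>\<omega>. restrict (\<lambda>i. v i \<omega>) {k})"
    by (rule indep_var_restrict[OF indep]) auto
  from indep_var_compose[OF this F G_step]
  show ?thesis by (simp add: comp_def)
qed

text \<open>Each increment of the stopped process is a function of the first \<open>k\<close> steps times the
  centred variable \<open>exp (be * v k) - 1\<close>, which is independent of them.\<close>

lemma integral_stopped_exp:
  assumes "prob_space M"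
    and indep: "\<And>n. prob_space.indep_vars M (\<lambda>_. borel) v {..<n}"
    and integrable: "\<And>i. integrable M (\<lambda>\<omega>. exp (be * v i \<omega>))"
    and mean: "\<And>i. (\<integral>\<omega>. exp (be * v i \<omega>) \<partial>M) = 1"
    and be: "0 \<le> be"
  shows "integrable M (\<lambda>\<omega>. stopped_exp be lo hi (\<lambda>i. v i \<omega>) n)
    \<and> (\<integral>\<omega>. stopped_exp be lo hi (\<lambda>i. v i \<omega>) n \<partial>M) = 1"
proof (induction n)
  interpret prob_space M by fact
  case 0
  show ?case by (simp add: prob_space)
next
  interpret prob_space M by fact
  case (Suc k)
  have v_measurable: "v i \<in> borel_measurable M" for i
    using indep[of "Suc i"] unfolding indep_vars_def by auto
  define F' where "F' r = (if stays_inside lo hi r k then exp (be * partial_sum r k) else 0)"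
    for r :: "nat \<Rightarrow> real"
  define F where "F \<omega> = F' (restrict (\<lambda>i. v i \<omega>) {..<k})" for \<omega>
  define G where "G \<omega> = exp (be * v k \<omega>) - 1" for \<omega>
  have F'_measurable: "F' \<in> borel_measurable (PiM {..<k} (\<lambda>_. borel))"
  proof -
    note [measurable] = partial_sum_measurable_PiM[OF order_refl] stays_inside_measurable_PiM
    show ?thesis unfolding F'_def by measurable
  qed
  have FG_indep: "indep_var borel F borel G"
    unfolding F_def[abs_def] G_def[abs_def]
    by (rule indep_var_prefix_step[OF prob_space_axioms indep F'_measurable]) simp
  have F_measurable: "F \<in> borel_measurable M"
    unfolding F_def
    by (intro measurable_compose[OF _ F'_measurable] measurable_restrict v_measurable)
  have "norm (F \<omega>) \<le> exp (be * hi)" for \<omega>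
    using be unfolding F_def F'_def stays_inside_restrict
    by (auto simp: partial_sum_restrict stays_inside_def mult_left_mono)
  with F_measurable have F_integrable: "integrable M F"
    by (intro integrable_const_bound[where B = "exp (be * hi)"]) auto
  have G_integrable: "integrable M G" and "(\<integral>\<omega>. G \<omega> \<partial>M) = 0"
    unfolding G_def using integrable mean by (simp_all add: prob_space)
  then have "(\<integral>\<omega>. F \<omega> * G \<omega> \<partial>M) = 0"
    using indep_var_lebesgue_integral[OF FG_indep F_integrable G_integrable] by simp
  moreover have "integrable M (\<lambda>\<omega>. F \<omega> * G \<omega>)"
    by (rule indep_var_integrable[OF FG_indep F_integrable G_integrable])
  moreover have "stopped_exp be lo hi (\<lambda>i. v i \<omega>) (Suc k)
      = stopped_exp be lo hi (\<lambda>i. v i \<omega>) k + F \<omega> * G \<omega>" for \<omega>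
    unfolding F_def F'_def G_def stopped_exp_Suc_increment
    by (simp add: stays_inside_restrict partial_sum_restrict)
  ultimately show ?case
    using Suc by simp
qed

section \<open>The drifted motion on a grid\<close>

definition bm_step :: "(real \<Rightarrow> 'a \<Rightarrow> real) \<Rightarrow> real \<Rightarrow> real \<Rightarrow> nat \<Rightarrow> 'a \<Rightarrow> real" where
  "bm_step W \<beta> h i \<omega> = drift_bm W \<beta> (real (Suc i) * h) \<omega> - drift_bm W \<beta> (real i * h) \<omega>"

lemma bm_step_measurable [measurable]:
  "std_brownian_motion M W \<Longrightarrow> bm_step W \<beta> h i \<in> borel_measurable M"
  unfolding bm_step_def by measurable

lemma partial_sum_bm_step:
  assumes "std_brownian_motion M W" and "\<omega> \<in> space M"
  shows "partial_sum (\<lambda>i. bm_step W \<beta> h i \<omega>) k = drift_bm W \<beta> (real k * h) \<omega>"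
  unfolding partial_sum_def bm_step_def
  using sum_lessThan_telescope[of "\<lambda>i. drift_bm W \<beta> (real i * h) \<omega>" k] drift_bm_zero[OF assms]
  by simp

lemma bm_step_indep:
  assumes BM: "std_brownian_motion M W" and "h > 0"
  shows "prob_space.indep_vars M (\<lambda>_. borel) (bm_step W \<beta> h) {..<n}"
proof -
  interpret prob_space M using std_brownian_motionD(1)[OF BM] .
  have "\<forall>(ts :: nat \<Rightarrow> real) n. 0 \<le> ts 0 \<longrightarrow> (\<forall>i<n. ts i < ts (Suc i)) \<longrightarrow>
      indep_vars (\<lambda>_. borel) (\<lambda>i \<omega>. W (ts (Suc i)) \<omega> - W (ts i) \<omega>) {..<n}"
    using BM unfolding std_brownian_motion_def by blast
  from this[rule_format, of "\<lambda>i. real i * h" n]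
  have "indep_vars (\<lambda>_. borel) (\<lambda>i \<omega>. W (real (Suc i) * h) \<omega> - W (real i * h) \<omega>) {..<n}"
    using \<open>h > 0\<close> by simp
  then have "indep_vars (\<lambda>_. borel)
      (\<lambda>i \<omega>. (\<lambda>x. sqrt 2 * x - \<beta> * h) (W (real (Suc i) * h) \<omega> - W (real i * h) \<omega>)) {..<n}"
    by (rule indep_vars_compose2) auto
  moreover have "bm_step W \<beta> h = (\<lambda>i \<omega>. sqrt 2 * (W (real (Suc i) * h) \<omega> - W (real i * h) \<omega>) - \<beta> * h)"
    by (simp add: fun_eq_iff bm_step_def drift_bm_def algebra_simps)
  ultimately show ?thesis by simp
qed

lemma bm_step_mgf:
  assumes "std_brownian_motion M W" and "h > 0"
  shows "integrable M (\<lambda>\<omega>. exp (c * bm_step W \<beta> h i \<omega>))"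
    and "(\<integral>\<omega>. exp (c * bm_step W \<beta> h i \<omega>) \<partial>M) = exp ((c\<^sup>2 - c * \<beta>) * h)"
  using drift_bm_increment_mgf[OF assms(1), of "real i * h" "real (Suc i) * h" c \<beta>] assms(2)
  unfolding bm_step_def by (simp_all add: algebra_simps)

lemma drift_bm_exp_moment:
  assumes BM: "std_brownian_motion M W" and "0 < t"
  shows "integrable M (\<lambda>\<omega>. exp (c * (drift_bm W \<beta> t \<omega> - a)))"
    and "(\<integral>\<omega>. exp (c * (drift_bm W \<beta> t \<omega> - a)) \<partial>M) = exp ((c\<^sup>2 - c * \<beta>) * t - c * a)"
proof -
  have eq: "exp (c * (drift_bm W \<beta> t \<omega> - a))
      = exp (- c * a) * exp (c * (drift_bm W \<beta> t \<omega> - drift_bm W \<beta> 0 \<omega>))" if "\<omega> \<in> space M" for \<omega>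
    using drift_bm_zero[OF BM that] by (simp add: mult_exp_exp algebra_simps)
  note mgf = drift_bm_increment_mgf[OF BM order_refl \<open>0 < t\<close>, of c \<beta>]
  have "integrable M (\<lambda>\<omega>. exp (- c * a) * exp (c * (drift_bm W \<beta> t \<omega> - drift_bm W \<beta> 0 \<omega>)))"
    using mgf(1) by (rule integrable_mult_right)
  then show "integrable M (\<lambda>\<omega>. exp (c * (drift_bm W \<beta> t \<omega> - a)))"
    by (simp add: eq cong: Bochner_Integration.integrable_cong)
  have "(\<integral>\<omega>. exp (c * (drift_bm W \<beta> t \<omega> - a)) \<partial>M)
      = exp (- c * a) * (\<integral>\<omega>. exp (c * (drift_bm W \<beta> t \<omega> - drift_bm W \<beta> 0 \<omega>)) \<partial>M)"
    by (simp add: eq cong: Bochner_Integration.integral_cong)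
  also have "\<dots> = exp ((c\<^sup>2 - c * \<beta>) * t - c * a)"
    unfolding mgf(2) by (simp add: mult_exp_exp)
  finally show "(\<integral>\<omega>. exp (c * (drift_bm W \<beta> t \<omega> - a)) \<partial>M) = exp ((c\<^sup>2 - c * \<beta>) * t - c * a)" .
qed

lemma bm_step_exp_sum:
  assumes "std_brownian_motion M W" and "h > 0"
  shows "integrable M (\<lambda>\<omega>. \<Sum>i<N. exp (c * bm_step W \<beta> h i \<omega> - b))"
    and "(\<integral>\<omega>. (\<Sum>i<N. exp (c * bm_step W \<beta> h i \<omega> - b)) \<partial>M) = real N * exp ((c\<^sup>2 - c * \<beta>) * h - b)"
proof -
  have eq: "exp (c * bm_step W \<beta> h i \<omega> - b) = exp (- b) * exp (c * bm_step W \<beta> h i \<omega>)" for i \<omega>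
    by (simp add: mult_exp_exp)
  show "integrable M (\<lambda>\<omega>. \<Sum>i<N. exp (c * bm_step W \<beta> h i \<omega> - b))"
    unfolding eq by (intro Bochner_Integration.integrable_sum integrable_mult_right bm_step_mgf(1)[OF assms])
  show "(\<integral>\<omega>. (\<Sum>i<N. exp (c * bm_step W \<beta> h i \<omega> - b)) \<partial>M) = real N * exp ((c\<^sup>2 - c * \<beta>) * h - b)"
    unfolding eq
    by (simp add: Bochner_Integration.integral_sum integrable_mult_right bm_step_mgf[OF assms])
      (simp add: mult_exp_exp)
qed

lemma lower_bound_from_mixture:
  fixes a b p r :: real
  assumes "1 \<le> a" and "0 \<le> b" and "0 \<le> p" and "0 \<le> r"
    and mixture: "1 \<le> a * p + b * (1 - p) + r"
  shows "(1 - b) / a - r \<le> p"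
proof -
  have "r \<le> r * a" and "0 \<le> b * p"
    using assms mult_left_mono[of 1 a r] by auto
  with mixture have "1 - b - r * a \<le> p * a"
    by (simp add: algebra_simps)
  moreover have "(1 - b) / a - r = (1 - b - r * a) / a"
    using \<open>1 \<le> a\<close> by (simp add: field_simps)
  ultimately show ?thesis
    using \<open>1 \<le> a\<close> by (simp add: divide_le_eq)
qed

lemma exits_above_bm_step_sets:
  assumes BM: "std_brownian_motion M W"
  shows "{\<omega> \<in> space M. exits_above lo hi (\<lambda>i. bm_step W \<beta> h i \<omega>) N} \<in> sets M"
proof -
  note [measurable] = bm_step_measurable[OF BM]
  have [measurable]: "(\<lambda>\<omega>. partial_sum (\<lambda>i. bm_step W \<beta> h i \<omega>) k) \<in> borel_measurable M" for k
    unfolding partial_sum_def by measurable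
  show ?thesis
    unfolding exits_above_def by measurable
qed

lemma integral_stopped_exp_bm_step:
  assumes BM: "std_brownian_motion M W" and h: "h > 0" and "\<beta> \<ge> 0"
  shows "integrable M (\<lambda>\<omega>. stopped_exp \<beta> lo hi (\<lambda>i. bm_step W \<beta> h i \<omega>) N)
    \<and> (\<integral>\<omega>. stopped_exp \<beta> lo hi (\<lambda>i. bm_step W \<beta> h i \<omega>) N \<partial>M) = 1"
  using assms std_brownian_motionD(1)[OF BM]
  by (intro integral_stopped_exp bm_step_indep[OF BM h])
    (simp_all add: bm_step_mgf[OF BM h] power2_eq_square)

lemma prob_exits_above_ge:
  assumes BM: "std_brownian_motion M W" and h: "h > 0" and N: "N > 0" and \<beta>: "\<beta> > 0"
    and lo: "lo < 0" and hi: "0 \<le> hi" and \<delta>: "\<delta> > 0" and \<mu>: "\<mu> \<ge> 0"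
  defines "U \<equiv> {\<omega> \<in> space M. exits_above lo hi (\<lambda>i. bm_step W \<beta> h i \<omega>) N}"
  shows "(1 - exp (\<beta> * lo)) / exp (\<beta> * (hi + \<delta>))
        - exp (\<beta> * hi) * (exp (- \<beta> * lo / 2 - \<beta>\<^sup>2 * (real N * h) / 4)
                          + real N * exp (\<mu> * (\<beta> + \<mu>) * h - \<mu> * \<delta>))
      \<le> measure M U"
proof -
  interpret prob_space M using std_brownian_motionD(1)[OF BM] .
  have U_sets: "U \<in> sets M"
    unfolding U_def by (rule exits_above_bm_step_sets[OF BM])
  define chernoff where "chernoff \<omega> = exp (\<beta> / 2 * (drift_bm W \<beta> (real N * h) \<omega> - lo))" for \<omega>
  define overshoot where "overshoot \<omega> = (\<Sum>i<N. exp ((\<beta> + \<mu>) * bm_step W \<beta> h i \<omega> - \<mu> * \<delta>))" for \<omega>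
  define bound where "bound \<omega> = exp (\<beta> * (hi + \<delta>)) * indicator U \<omega> + exp (\<beta> * lo) * (1 - indicator U \<omega>)
    + exp (\<beta> * hi) * (chernoff \<omega> + overshoot \<omega>)" for \<omega>
  have stopped_le: "stopped_exp \<beta> lo hi (\<lambda>i. bm_step W \<beta> h i \<omega>) N \<le> bound \<omega>" if "\<omega> \<in> space M" for \<omega>
    using stopped_exp_le[OF lo hi \<beta> \<delta> \<mu>, of "\<beta> / 2" "\<lambda>i. bm_step W \<beta> h i \<omega>" N] that \<beta>
    by (cases "exits_above lo hi (\<lambda>i. bm_step W \<beta> h i \<omega>) N")
      (simp_all add: bound_def U_def chernoff_def overshoot_def partial_sum_bm_step[OF BM])
  note stopped = integral_stopped_exp_bm_step[OF BM h less_imp_le[OF \<beta>], of lo hi N]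
  have "0 < real N * h" using N h by simp
  from drift_bm_exp_moment[OF BM this, where c = "\<beta> / 2" and a = lo]
  have chernoff: "integrable M chernoff"
      "(\<integral>\<omega>. chernoff \<omega> \<partial>M) = exp (- \<beta> * lo / 2 - \<beta>\<^sup>2 * (real N * h) / 4)"
    unfolding chernoff_def[abs_def] by (simp_all add: power2_eq_square field_simps)
  from bm_step_exp_sum[OF BM h, where N = N and c = "\<beta> + \<mu>" and b = "\<mu> * \<delta>"]
  have overshoot: "integrable M overshoot"
      "(\<integral>\<omega>. overshoot \<omega> \<partial>M) = real N * exp (\<mu> * (\<beta> + \<mu>) * h - \<mu> * \<delta>)"
    unfolding overshoot_def[abs_def] by (simp_all add: power2_eq_square algebra_simps)
  have indicator: "integrable M (indicator U :: 'a \<Rightarrow> real)" "(\<integral>\<omega>. indicator U \<omega> \<partial>M) = measure M U"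
    using U_sets by (simp_all add: integrable_indicator_iff less_top[symmetric])
  have "1 = (\<integral>\<omega>. stopped_exp \<beta> lo hi (\<lambda>i. bm_step W \<beta> h i \<omega>) N \<partial>M)"
    using stopped by simp
  also have "\<dots> \<le> (\<integral>\<omega>. bound \<omega> \<partial>M)"
  proof (rule integral_mono)
    show "integrable M bound"
      unfolding bound_def using chernoff overshoot indicator by auto
  qed (use stopped stopped_le in auto)
  also have "\<dots> = exp (\<beta> * (hi + \<delta>)) * measure M U + exp (\<beta> * lo) * (1 - measure M U)
      + exp (\<beta> * hi) * (exp (- \<beta> * lo / 2 - \<beta>\<^sup>2 * (real N * h) / 4)
                        + real N * exp (\<mu> * (\<beta> + \<mu>) * h - \<mu> * \<delta>))"
    unfolding bound_def using chernoff overshoot indicator by (simp add: prob_space)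
  finally show ?thesis
    using \<beta> hi \<delta> by (intro lower_bound_from_mixture) auto
qed

text \<open>Only rational times enter, so that the set is measurable; by continuity of the paths
  the bound then holds at all times of each cell (\<open>small_dips_drift_bm_ge\<close>).\<close>

definition small_dips :: "'a measure \<Rightarrow> (real \<Rightarrow> 'a \<Rightarrow> real) \<Rightarrow> real \<Rightarrow> real \<Rightarrow> real \<Rightarrow> nat \<Rightarrow> 'a set" where
  "small_dips M W \<beta> H \<epsilon> n = {\<omega> \<in> space M. \<forall>k<(2::nat)^n. \<forall>r\<in>\<rat>.
     real k * (H / 2^n) \<le> r \<longrightarrow> r \<le> real (Suc k) * (H / 2^n) \<longrightarrow>
     drift_bm W \<beta> (real k * (H / 2^n)) \<omega> - \<epsilon> \<le> drift_bm W \<beta> r \<omega>}"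

lemma small_dips_sets:
  assumes "std_brownian_motion M W"
  shows "small_dips M W \<beta> H \<epsilon> n \<in> sets M"
proof -
  note [measurable] = drift_bm_measurable[OF assms]
  show ?thesis unfolding small_dips_def using countable_rat by measurable
qed

lemma small_dips_drift_bm_ge:
  assumes BM: "std_brownian_motion M W" and H: "H > 0" and \<omega>: "\<omega> \<in> small_dips M W \<beta> H \<epsilon> n"
    and k: "k < 2^n" and s: "s \<in> {real k * (H / 2^n)..real (Suc k) * (H / 2^n)}"
  shows "drift_bm W \<beta> (real k * (H / 2^n)) \<omega> - \<epsilon> \<le> drift_bm W \<beta> s \<omega>"
proof (rule continuous_on_Icc_ge_if_Rats[OF _ _ _ s])
  have "\<omega> \<in> space M" using \<omega> unfolding small_dips_def by auto
  with BM show "continuous_on {real k * (H / 2^n)..real (Suc k) * (H / 2^n)} (\<lambda>t. drift_bm W \<beta> t \<omega>)"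
    using H by (intro continuous_on_subset[OF drift_bm_continuous]) auto
  show "real k * (H / 2^n) < real (Suc k) * (H / 2^n)"
    using H by (simp add: field_simps)
qed (use \<omega> k in \<open>auto simp: small_dips_def\<close>)

lemma eventually_small_dips:
  assumes BM: "std_brownian_motion M W" and H: "H > 0" and \<epsilon>: "\<epsilon> > 0" and \<omega>: "\<omega> \<in> space M"
  shows "eventually (\<lambda>n. \<omega> \<in> small_dips M W \<beta> H \<epsilon> n) sequentially"
proof -
  define X where "X t = drift_bm W \<beta> t \<omega>" for t
  have "continuous_on {0..H} X"
    unfolding X_def using drift_bm_continuous[OF BM \<omega>] by (rule continuous_on_subset) auto
  then have "uniformly_continuous_on {0..H} X"
    by (rule compact_uniformly_continuous) simp
  then obtain d where d: "d > 0" "\<And>s t. s \<in> {0..H} \<Longrightarrow> t \<in> {0..H} \<Longrightarrow> dist t s < d \<Longrightarrow> dist (X t) (X s) < \<epsilon>"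
    using \<epsilon> unfolding uniformly_continuous_on_def by metis
  have "(\<lambda>n::nat. H / 2^n) \<longlonglongrightarrow> 0" by real_asymp
  then have "eventually (\<lambda>n. H / 2^n < d) sequentially"
    using d(1) by (rule order_tendstoD)
  then show ?thesis
  proof (rule eventually_mono)
    fix n assume mesh: "H / 2^n < d"
    have dip: "X (real k * (H / 2^n)) - \<epsilon> \<le> X r"
      if k: "k < 2^n" and r: "real k * (H / 2^n) \<le> r" "r \<le> real (Suc k) * (H / 2^n)" for k r
    proof -
      define a where "a = real k * (H / 2^n)"
      have "real (Suc k) \<le> 2^n" using k
        by (metis Suc_leI of_nat_le_iff of_nat_numeral of_nat_power)
      then have "real (Suc k) * (H / 2^n) \<le> H"
        using H mult_right_mono[of "real (Suc k)" "2^n" "H / 2^n"] by simp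
      moreover have "real (Suc k) * (H / 2^n) = a + H / 2^n"
        unfolding a_def by (simp add: algebra_simps add_divide_distrib)
      moreover have "0 \<le> a" unfolding a_def using H by simp
      ultimately have "a \<in> {0..H}" "r \<in> {0..H}" "dist r a < d"
        using r mesh unfolding a_def[symmetric] by (auto simp: dist_real_def)
      then have "dist (X r) (X a) < \<epsilon>" by (rule d(2))
      then show ?thesis unfolding a_def by (simp add: dist_real_def)
    qed
    show "\<omega> \<in> small_dips M W \<beta> H \<epsilon> n"
      unfolding small_dips_def
    proof (intro CollectI conjI allI ballI impI)
      fix k r assume k: "k < 2^n" and "r \<in> \<rat>"
        and r: "real k * (H / 2^n) \<le> r" "r \<le> real (Suc k) * (H / 2^n)"
      from dip[OF k r] show "drift_bm W \<beta> (real k * (H / 2^n)) \<omega> - \<epsilon> \<le> drift_bm W \<beta> r \<omega>"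
        unfolding X_def .
    qed (rule \<omega>)
  qed
qed

lemma measure_small_dips_tendsto:
  assumes BM: "std_brownian_motion M W" and "H > 0" and "\<epsilon> > 0"
  shows "(\<lambda>n. measure M (small_dips M W \<beta> H \<epsilon> n)) \<longlonglongrightarrow> 1"
proof -
  interpret prob_space M using std_brownian_motionD(1)[OF BM] .
  define G where "G n = space M \<inter> (\<Inter>m\<in>{n..}. small_dips M W \<beta> H \<epsilon> m)" for n
  have G_sets: "G n \<in> sets M" for n
    unfolding G_def using small_dips_sets[OF BM] by (intro sets.Int sets.top countable_Un_Int(2)) auto
  have "incseq G"
  proof (rule incseq_SucI)
    show "G n \<subseteq> G (Suc n)" for n
      unfolding G_def by (intro Int_mono order_refl INF_superset_mono) auto
  qed
  moreover have "(\<Union>n. G n) = space M"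
  proof
    show "(\<Union>n. G n) \<subseteq> space M" unfolding G_def by blast
    show "space M \<subseteq> (\<Union>n. G n)"
    proof
      fix \<omega> assume \<omega>: "\<omega> \<in> space M"
      then obtain n where "\<forall>m\<ge>n. \<omega> \<in> small_dips M W \<beta> H \<epsilon> m"
        using eventually_small_dips[OF assms] unfolding eventually_sequentially by blast
      with \<omega> have "\<omega> \<in> G n" unfolding G_def by blast
      then show "\<omega> \<in> (\<Union>n. G n)" by blast
    qed
  qed
  ultimately have G_lim: "(\<lambda>n. measure M (G n)) \<longlonglongrightarrow> 1"
    using finite_Lim_measure_incseq[of G] G_sets by (auto simp: prob_space)
  have "G n \<subseteq> small_dips M W \<beta> H \<epsilon> n" for n
    unfolding G_def by (intro le_infI2 INT_lower) simp
  then have "eventually (\<lambda>n. measure M (G n) \<le> measure M (small_dips M W \<beta> H \<epsilon> n)) sequentially"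
    using small_dips_sets[OF BM] by (intro always_eventually allI finite_measure_mono)
  moreover have "eventually (\<lambda>n. measure M (small_dips M W \<beta> H \<epsilon> n) \<le> 1) sequentially"
    by (intro always_eventually allI prob_le_1)
  ultimately show ?thesis
    using G_lim tendsto_const by (rule tendsto_sandwich)
qed

lemma grid_cell_cover:
  fixes h s :: real
  assumes "h > 0" and "0 \<le> s" and "s \<le> real k * h" and "k > 0"
  obtains j where "j < k" and "real j * h \<le> s" and "s \<le> real (Suc j) * h"
  using assms(3,4)
proof (induction k arbitrary: thesis)
  case (Suc k)
  show ?case
  proof (cases "0 < k \<and> s \<le> real k * h")
    case True
    then show ?thesis using Suc.IH[of thesis] Suc.prems(1) less_SucI by blast
  next
    case False
    then have "real k * h \<le> s" using assms(2) by auto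
    then show ?thesis using Suc.prems(1)[of k] Suc.prems(2) by simp
  qed
qed simp

text \<open>Between grid points the drifted motion dips at most \<open>\<epsilon>\<close> below its grid values, so staying
  above \<open>\<epsilon> - B\<close> on the grid keeps it above \<open>-B\<close>, and hence \<open>Q\<^sub>2 \<ge> 2B + drift_bm\<close> above \<open>B\<close>.\<close>

lemma hits_first_if_exits_above:
  assumes BM: "std_brownian_motion M W" and R: "reflected_solution M \<beta> 0 (2 * B) W Q1 Q2 L"
    and B: "B > 0" and y: "2 * B \<le> y" and H: "H > 0"
    and dips: "\<omega> \<in> small_dips M W \<beta> H \<epsilon> n"
    and exits: "exits_above (\<epsilon> - B) (y - 2 * B) (\<lambda>i. bm_step W \<beta> (H / 2^n) i \<omega>) (2^n)"
  shows "\<omega> \<in> hits_first M Q2 y B"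
proof -
  define h where "h = H / 2^n"
  have h: "h > 0" using H unfolding h_def by simp
  have \<omega>: "\<omega> \<in> space M" using dips unfolding small_dips_def by auto
  define X where "X t = drift_bm W \<beta> t \<omega>" for t
  obtain k where k: "k \<le> 2^n" "y - 2 * B \<le> X (real k * h)"
    and above: "\<And>j. j < k \<Longrightarrow> \<epsilon> - B < X (real j * h)"
    using exits unfolding exits_above_def partial_sum_bm_step[OF BM \<omega>] X_def h_def by auto
  define T where "T = real k * h"
  have T: "0 \<le> T" unfolding T_def using h by simp
  have X_above: "- B < X s" if s: "0 \<le> s" "s \<le> T" for s
  proof (cases "k = 0")
    case True
    then show ?thesis using s B drift_bm_zero[OF BM \<omega>] unfolding T_def X_def by simp
  next
    case False
    then obtain j where j: "j < k" "real j * h \<le> s" "s \<le> real (Suc j) * h"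
      using grid_cell_cover[OF h s(1)] s(2) unfolding T_def by blast
    then have "X (real j * h) - \<epsilon> \<le> X s"
      using small_dips_drift_bm_ge[OF BM H dips, of j s] k(1) unfolding X_def h_def by simp
    with above[OF j(1)] show ?thesis by simp
  qed
  have Q2_ge: "2 * B + X s \<le> Q2 s \<omega>" if "0 \<le> s" for s
    using reflected_solution_Q2_ge[OF R \<omega> that] unfolding X_def by simp
  have "B < Q2 s \<omega>" if "s \<in> {0..T}" for s
  proof -
    have "- B < X s" "2 * B + X s \<le> Q2 s \<omega>"
      using that X_above Q2_ge by auto
    then show ?thesis by linarith
  qed
  moreover have "y \<le> Q2 T \<omega>"
    using Q2_ge[OF T] k(2) unfolding T_def by simp
  ultimately show ?thesis
    using hitting_time_less_if_reaches[OF reflected_solution_pathD(2)[OF R \<omega>] _ T, of y B]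
      reflected_solution_Q2_zero[OF R \<omega>] y \<omega>
    unfolding hits_first_def by auto
qed

section \<open>Passing to the limit\<close>

lemma (in prob_space) prob_ge_if_Int_subset:
  assumes "U \<in> events" and "G \<in> events" and "S \<in> events" and "U \<inter> G \<subseteq> S"
  shows "prob U - (1 - prob G) \<le> prob S"
proof -
  have "prob U \<le> prob (S \<union> (space M - G))"
    using assms sets.sets_into_space[OF assms(1)] by (intro finite_measure_mono) auto
  also have "\<dots> \<le> prob S + prob (space M - G)"
    using assms by (intro measure_Un_le) auto
  finally show ?thesis
    using prob_compl[OF assms(2)] by simp
qed

lemma prob_hits_first_ge_grid:
  assumes \<beta>: "\<beta> > 0" and B: "B > 0" and BM: "std_brownian_motion M W"
    and R: "reflected_solution M \<beta> 0 (2 * B) W Q1 Q2 L" and y: "2 * B \<le> y"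
    and \<epsilon>: "0 < \<epsilon>" "\<epsilon> < B" and H: "H > 0"
  shows "exp (- \<beta> * (y - 2 * B + \<epsilon>)) * (1 - exp (- \<beta> * (B - \<epsilon>)))
      - exp (\<beta> * (y - 2 * B)) * (exp (\<beta> * (B - \<epsilon>) / 2 - \<beta>\<^sup>2 * H / 4)
          + 2^n * exp (\<beta> * sqrt (H / 2^n) + 1 - \<epsilon> / sqrt (H / 2^n)))
      - (1 - measure M (small_dips M W \<beta> H \<epsilon> n))
    \<le> measure M (hits_first M Q2 y B)"
proof -
  interpret prob_space M using std_brownian_motionD(1)[OF BM] .
  define h where "h = H / 2^n"
  have h: "h > 0" using H by (simp add: h_def)
  define U where "U = {\<omega> \<in> space M. exits_above (\<epsilon> - B) (y - 2 * B) (\<lambda>i. bm_step W \<beta> h i \<omega>) (2^n)}"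
  define G where "G = small_dips M W \<beta> H \<epsilon> n"
  define S where "S = hits_first M Q2 y B"
  have lo: "\<epsilon> - B < 0" and hi: "0 \<le> y - 2 * B" and \<mu>: "0 \<le> 1 / sqrt h"
    using \<epsilon> y h by simp_all
  note bound = prob_exits_above_ge[OF BM h _ \<beta> lo hi \<epsilon>(1) \<mu>, of "2^n", folded U_def]
  have "(1 - exp (\<beta> * (\<epsilon> - B))) / exp (\<beta> * (y - 2 * B + \<epsilon>))
      = exp (- \<beta> * (y - 2 * B + \<epsilon>)) * (1 - exp (- \<beta> * (B - \<epsilon>)))"
  proof -
    have "- \<beta> * (B - \<epsilon>) = \<beta> * (\<epsilon> - B)" by (simp add: algebra_simps)
    moreover have "exp (- \<beta> * (y - 2 * B + \<epsilon>)) = inverse (exp (\<beta> * (y - 2 * B + \<epsilon>)))"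
      by (simp add: exp_minus[symmetric])
    ultimately show ?thesis by (simp add: divide_inverse mult.commute)
  qed
  moreover have "exp (- \<beta> * (\<epsilon> - B) / 2 - \<beta>\<^sup>2 * (real (2^n) * h) / 4)
      = exp (\<beta> * (B - \<epsilon>) / 2 - \<beta>\<^sup>2 * H / 4)"
    by (simp add: h_def algebra_simps)
  moreover have "1 / sqrt h * (\<beta> + 1 / sqrt h) * h - 1 / sqrt h * \<epsilon> = \<beta> * sqrt h + 1 - \<epsilon> / sqrt h"
    using h by (simp add: field_simps real_sqrt_mult[symmetric])
  moreover have "real (2^n) = (2::real)^n" by simp
  ultimately have U_ge: "exp (- \<beta> * (y - 2 * B + \<epsilon>)) * (1 - exp (- \<beta> * (B - \<epsilon>)))
      - exp (\<beta> * (y - 2 * B)) * (exp (\<beta> * (B - \<epsilon>) / 2 - \<beta>\<^sup>2 * H / 4)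
          + 2^n * exp (\<beta> * sqrt h + 1 - \<epsilon> / sqrt h)) \<le> measure M U"
    using bound by simp
  have U_sets: "U \<in> sets M"
    unfolding U_def by (rule exits_above_bm_step_sets[OF BM])
  have S_sets: "S \<in> sets M"
    unfolding S_def using reflected_solution_measurable[OF R] reflected_solution_pathD(2)[OF R]
      reflected_solution_Q2_zero[OF R] B y by (intro hits_first_sets) auto
  have G_sets: "G \<in> sets M"
    unfolding G_def by (rule small_dips_sets[OF BM])
  have "U \<inter> G \<subseteq> S"
    using hits_first_if_exits_above[OF BM R B y H] unfolding U_def G_def S_def h_def by blast
  from prob_ge_if_Int_subset[OF U_sets G_sets S_sets this] U_ge
  show ?thesis
    unfolding S_def G_def h_def by simp
qed

lemma prob_hits_first_ge_horizon:
  assumes \<beta>: "\<beta> > 0" and B: "B > 0" and BM: "std_brownian_motion M W"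
    and R: "reflected_solution M \<beta> 0 (2 * B) W Q1 Q2 L" and y: "2 * B \<le> y"
    and \<epsilon>: "0 < \<epsilon>" "\<epsilon> < B" and H: "H > 0"
  shows "exp (- \<beta> * (y - 2 * B + \<epsilon>)) * (1 - exp (- \<beta> * (B - \<epsilon>)))
      - exp (\<beta> * (y - 2 * B)) * exp (\<beta> * (B - \<epsilon>) / 2 - \<beta>\<^sup>2 * H / 4)
    \<le> measure M (hits_first M Q2 y B)"
proof -
  define c where "c = exp (- \<beta> * (y - 2 * B + \<epsilon>)) * (1 - exp (- \<beta> * (B - \<epsilon>)))"
  define a where "a = exp (\<beta> * (y - 2 * B))"
  define d where "d = exp (\<beta> * (B - \<epsilon>) / 2 - \<beta>\<^sup>2 * H / 4)"
  have "(\<lambda>n::nat. 2^n * exp (\<beta> * sqrt (H / 2^n) + 1 - \<epsilon> / sqrt (H / 2^n))) \<longlonglongrightarrow> 0"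
    using H \<epsilon> by real_asymp
  then have "(\<lambda>n. c - a * (d + 2^n * exp (\<beta> * sqrt (H / 2^n) + 1 - \<epsilon> / sqrt (H / 2^n)))
      - (1 - measure M (small_dips M W \<beta> H \<epsilon> n))) \<longlonglongrightarrow> c - a * (d + 0) - (1 - 1)"
    by (intro tendsto_intros measure_small_dips_tendsto[OF BM H \<epsilon>(1)])
  moreover have "\<forall>n. c - a * (d + 2^n * exp (\<beta> * sqrt (H / 2^n) + 1 - \<epsilon> / sqrt (H / 2^n)))
      - (1 - measure M (small_dips M W \<beta> H \<epsilon> n)) \<le> measure M (hits_first M Q2 y B)"
    using prob_hits_first_ge_grid[OF assms] unfolding a_def c_def d_def by blast
  ultimately have "c - a * (d + 0) - (1 - 1) \<le> measure M (hits_first M Q2 y B)"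
    by (intro tendsto_upperbound always_eventually) auto
  then show ?thesis
    unfolding a_def c_def d_def by simp
qed

lemma prob_hits_first_ge_raised_barrier:
  assumes \<beta>: "\<beta> > 0" and B: "B > 0" and BM: "std_brownian_motion M W"
    and R: "reflected_solution M \<beta> 0 (2 * B) W Q1 Q2 L" and y: "2 * B \<le> y"
    and \<epsilon>: "0 < \<epsilon>" "\<epsilon> < B"
  shows "exp (- \<beta> * (y - 2 * B + \<epsilon>)) * (1 - exp (- \<beta> * (B - \<epsilon>))) \<le> measure M (hits_first M Q2 y B)"
proof (rule tendsto_upperbound)
  show "((\<lambda>H. exp (- \<beta> * (y - 2 * B + \<epsilon>)) * (1 - exp (- \<beta> * (B - \<epsilon>)))
      - exp (\<beta> * (y - 2 * B)) * exp (\<beta> * (B - \<epsilon>) / 2 - \<beta>\<^sup>2 * H / 4))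
    \<longlongrightarrow> exp (- \<beta> * (y - 2 * B + \<epsilon>)) * (1 - exp (- \<beta> * (B - \<epsilon>)))) at_top"
    using \<beta> by real_asymp
  show "eventually (\<lambda>H. exp (- \<beta> * (y - 2 * B + \<epsilon>)) * (1 - exp (- \<beta> * (B - \<epsilon>)))
      - exp (\<beta> * (y - 2 * B)) * exp (\<beta> * (B - \<epsilon>) / 2 - \<beta>\<^sup>2 * H / 4)
    \<le> measure M (hits_first M Q2 y B)) at_top"
    using eventually_gt_at_top[of 0]
    by eventually_elim (rule prob_hits_first_ge_horizon[OF assms])
qed simp

theorem lemma5p4:
  fixes M :: "'a measure" and W Q1 Q2 L :: "real \<Rightarrow> 'a \<Rightarrow> real"
    and \<beta> B y :: real
  assumes "prob_space M"
    and "\<beta> > 0" and "B > 0"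
    and "std_brownian_motion M W"
    and "reflected_solution M \<beta> 0 (2 * B) W Q1 Q2 L"
    and "y \<ge> 2 * B"
  shows "measure M {\<omega> \<in> space M. hitting_time (\<lambda>t. Q2 t \<omega>) y < hitting_time (\<lambda>t. Q2 t \<omega>) B}
           \<ge> (1 - exp (- \<beta> * B)) * exp (- \<beta> * (y - 2 * B))"
proof -
  define \<phi> where "\<phi> \<epsilon> = exp (- \<beta> * (y - 2 * B + \<epsilon>)) * (1 - exp (- \<beta> * (B - \<epsilon>)))" for \<epsilon>
  have "\<phi> 0 \<le> measure M (hits_first M Q2 y B)"
  proof (rule tendsto_upperbound)
    show "(\<phi> \<longlongrightarrow> \<phi> 0) (at_right 0)"
      unfolding \<phi>_def by real_asymp
    show "eventually (\<lambda>\<epsilon>. \<phi> \<epsilon> \<le> measure M (hits_first M Q2 y B)) (at_right 0)"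
      using eventually_at_right_real[OF \<open>B > 0\<close>] unfolding \<phi>_def
      by eventually_elim (use prob_hits_first_ge_raised_barrier[OF assms(2-6)] in auto)
  qed simp
  then show ?thesis
    unfolding \<phi>_def hits_first_def by (simp add: mult.commute)
qed

end
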